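(* Let $f:(0,\infty)\to\mathbb{R}$ be defined by $$f(t)=\frac{e^{-t}}{-\log(1-e^{-t})}.$$ Then $f$ is nondecreasing on $(0,\infty)$, $\lim_{t\to0}f(t)=0$, $\lim_{t\to\infty}f(t)=1$, $1-f(t)\sim e^{-t}/2$ as $t\to\infty$, and $$\int_0^\infty\big(1-f(t)\big)\,dt=\gamma,$$ where $\gamma=-\Gamma'(1)$ is the Euler–Mascheroni constant.
   Context: $g\sim h$ means $g/h\to1$. *)

theory Defs
  imports "HOL-Analysis.Analysis" "HOL-Library.Landau_Symbols"
begin

definition f_lemma1 :: "real \<Rightarrow> real" where
  "f_lemma1 t = exp (- t) / (- ln (1 - exp (- t)))"

end

theory Submission
  imports Defs "HOL-Real_Asymp.Real_Asymp"
begin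

text \<open>With \<open>W t = - ln (1 - exp (- t))\<close>, a decreasing involution of \<open>(0, \<infinity>)\<close>, we have
  \<open>f t = exp (- t) / W t\<close> and, since \<open>exp (- W t) = 1 - exp (- t)\<close>,
  \<open>1 - f t = 1 - exp (- W t) / (W t * (exp t - 1))\<close>. Replacing \<open>exp (- W t)\<close> by
  \<open>(1 - W t / n) ^ n\<close> (and the integrand by \<open>1\<close> where \<open>W t > n\<close>) gives functions \<open>G\<^sub>n\<close>
  decreasing pointwise to \<open>1 - f\<close>. They have the elementary antiderivative
  \<open>t + ln (W t) + (\<Sum>k=1..n. (1 - W t / n) ^ k / k)\<close>, so \<open>\<integral> G\<^sub>n = H\<^sub>n - ln n\<close>, and monotone
  convergence yields \<open>\<integral> (1 - f) = \<gamma>\<close>.\<close>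

lemma has_integral_at_top_nonneg_deriv:
  fixes F g :: "real \<Rightarrow> real"
  assumes deriv: "\<And>x. x \<ge> a \<Longrightarrow> (F has_real_derivative g x) (at x)"
    and nonneg: "\<And>x. x \<ge> a \<Longrightarrow> 0 \<le> g x"
    and lim: "(F \<longlongrightarrow> B) at_top"
  shows "(g has_integral (B - F a)) {a..}"
proof (rule has_integral_to_inf)
  have FTC: "(g has_integral (F y - F a)) {a..y}" if "a \<le> y" for y
    using that deriv
    by (intro fundamental_theorem_of_calculus)
       (auto simp: has_real_derivative_iff_has_vector_derivative[symmetric]
             intro: has_field_derivative_at_within)
  show "g integrable_on {a..y}" for y
    using FTC[of y] by (cases "a \<le> y") auto
  have "((\<lambda>y. F y - F a) \<longlongrightarrow> B - F a) at_top"
    by (intro tendsto_intros lim)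
  moreover have "\<forall>\<^sub>F y in at_top. F y - F a = integral {a..y} g"
    using eventually_ge_at_top[of a] by eventually_elim (use FTC integral_unique in metis)
  ultimately show "((\<lambda>y. integral {a..y} g) \<longlongrightarrow> B - F a) at_top"
    by (rule Lim_transform_eventually)
qed (use nonneg in auto)

lemma one_minus_div_power_le_Suc_power:
  fixes y :: real
  assumes "m \<ge> 1" "0 \<le> y" "y \<le> m"
  shows "(1 - y / m) ^ m \<le> (1 - y / Suc m) ^ Suc m"
proof (cases "y = m")
  case True
  have "0 \<le> 1 - y / Suc m" using assms by (simp add: field_simps)
  then have "0 \<le> (1 - y / Suc m) ^ Suc m" by (rule zero_le_power)
  moreover have "(1 - y / m) ^ m = 0" using True assms by simp
  ultimately show ?thesis by linarith
next
  case False
  define b where "b = 1 - y / m"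
  define a where "a = 1 - y / Suc m"
  have m: "(0::real) < m" using assms by simp
  have b: "0 < b" using assms False m by (simp add: b_def field_simps)
  have "y / Suc m \<le> y / m" using assms m by (intro divide_left_mono) auto
  then have "0 \<le> (a - b) / b" using b by (simp add: a_def b_def)
  \<comment> \<open>Bernoulli's inequality for the ratio \<open>a / b\<close>, where \<open>(m + 1) (a - b) = 1 - b\<close>\<close>
  then have "1 + real (Suc m) * ((a - b) / b) \<le> (1 + (a - b) / b) ^ Suc m"
    by (intro Bernoulli_inequality) linarith
  moreover have "(1 - y / Suc m) - (1 - y / m) = y / (real m * real (Suc m))"
    using assms(1) diff_frac_eq[of "real m" "real (Suc m)" y y] by (simp add: algebra_simps)
  then have "a - b = y / (real m * real (Suc m))" by (simp add: a_def b_def)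
  then have "real (Suc m) * (a - b) = 1 - b"
    using m by (simp del: of_nat_Suc add: b_def)
  then have "1 + real (Suc m) * ((a - b) / b) = 1 / b"
    using b by (simp add: field_simps)
  moreover have "1 + (a - b) / b = a / b" using b by (simp add: field_simps)
  ultimately have "1 / b \<le> a ^ Suc m / b ^ Suc m" by (simp add: power_divide)
  then have "b ^ m \<le> a ^ Suc m" using b by (simp add: field_simps)
  then show ?thesis by (simp add: a_def b_def)
qed

lemma partial_log_series_has_derivative:
  assumes "n > 0" "y \<noteq> 0"
  shows "((\<lambda>y. \<Sum>k<n. (1 - y / n) ^ Suc k / Suc k) has_real_derivative
          - (1 - (1 - y / n) ^ n) / y) (at y)"
proof -
  have "((\<lambda>y. 1 - y / n) has_real_derivative - 1 / n) (at y)"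
    using assms by (auto intro!: derivative_eq_intros)
  from DERIV_cdivide[OF DERIV_power[OF this], of "Suc k" "Suc k" for k]
  have "((\<lambda>y. (1 - y / n) ^ Suc k / Suc k) has_real_derivative - ((1 - y / n) ^ k / n)) (at y)"
    for k by (simp del: of_nat_Suc)
  then have "((\<lambda>y. \<Sum>k<n. (1 - y / n) ^ Suc k / Suc k) has_real_derivative
          (\<Sum>k<n. - ((1 - y / n) ^ k / n))) (at y)"
    by (intro DERIV_sum)
  also have "(\<Sum>k<n. - ((1 - y / n) ^ k / n)) = - (\<Sum>k<n. (1 - y / n) ^ k) / n"
    by (simp add: sum_negf sum_divide_distrib)
  also have "(\<Sum>k<n. (1 - y / n) ^ k) = (1 - (1 - y / n) ^ n) / (y / n)"
    using assms by (subst sum_gp_strict) auto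
  also have "- ((1 - (1 - y / n) ^ n) / (y / n)) / n = - (1 - (1 - y / n) ^ n) / y"
    using assms by (simp add: field_simps)
  finally show ?thesis .
qed

definition W :: "real \<Rightarrow> real" where
  "W t = - ln (1 - exp (- t))"

lemma W_pos: "t > 0 \<Longrightarrow> 0 < W t"
  by (simp add: W_def)

lemma exp_neg_W: "t > 0 \<Longrightarrow> exp (- W t) = 1 - exp (- t)"
  by (simp add: W_def)

lemma W_W: "t > 0 \<Longrightarrow> W (W t) = t"
  using exp_neg_W[of t] by (simp add: W_def)

lemma W_antimono: "0 < s \<Longrightarrow> s \<le> t \<Longrightarrow> W t \<le> W s"
  by (simp add: W_def)

lemma W_le_iff: "0 < s \<Longrightarrow> 0 < t \<Longrightarrow> W t \<le> s \<longleftrightarrow> W s \<le> t"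
  by (metis W_W W_antimono W_pos)

lemma exp_neg_le_W: "t > 0 \<Longrightarrow> exp (- t) \<le> W t"
  using ln_one_minus_pos_upper_bound[of "exp (- t)"] by (simp add: W_def)

lemma W_le_one_div_exp_minus_one: "t > 0 \<Longrightarrow> W t \<le> 1 / (exp t - 1)"
proof -
  assume t: "t > 0"
  have "W t = ln (inverse (1 - exp (- t)))"
    using t by (simp add: W_def ln_inverse)
  also have "\<dots> \<le> inverse (1 - exp (- t)) - 1"
    using t by (intro ln_le_minus_one) simp
  also have "\<dots> = 1 / (exp t - 1)"
    using t by (simp add: exp_minus field_simps)
  finally show ?thesis .
qed

lemma W_has_derivative: "t > 0 \<Longrightarrow> (W has_real_derivative - 1 / (exp t - 1)) (at t)"
  unfolding W_def[abs_def]
  by (auto intro!: derivative_eq_intros simp: exp_minus field_simps)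

lemma f_lemma1_eq: "f_lemma1 t = exp (- t) / W t"
  by (simp add: f_lemma1_def W_def)

lemma f_lemma1_le_one: "t > 0 \<Longrightarrow> f_lemma1 t \<le> 1"
  using exp_neg_le_W[of t] W_pos[of t] by (simp add: f_lemma1_eq)

lemma one_minus_f_lemma1_eq:
  assumes "t > 0"
  shows "1 - f_lemma1 t = 1 - exp (- W t) / (W t * (exp t - 1))"
proof -
  have "exp t > 1" "W t > 0" using assms W_pos by auto
  then have "exp (- t) / W t = (1 - exp (- t)) / (W t * (exp t - 1))"
    by (simp add: exp_minus field_simps)
  then show ?thesis by (simp add: f_lemma1_eq exp_neg_W[OF assms])
qed

lemma mono_on_f_lemma1: "mono_on {0<..} f_lemma1"
proof (rule mono_onI)
  fix a b :: real
  assume ab: "a \<in> {0<..}" "b \<in> {0<..}" "a \<le> b"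
  show "f_lemma1 a \<le> f_lemma1 b"
  proof (rule DERIV_nonneg_imp_nondecreasing[OF ab(3)])
    fix x assume "a \<le> x" "x \<le> b"
    then have x: "x > 0" using ab by simp
    define f' where "f' = exp (- x) * (1 / (exp x - 1) - W x) / W x ^ 2"
    have "(f_lemma1 has_real_derivative f') (at x)"
      unfolding f_lemma1_eq[abs_def] f'_def using W_pos[OF x]
      by (auto intro!: derivative_eq_intros W_has_derivative[OF x]
          simp: power2_eq_square field_simps)
    moreover have "0 \<le> f'"
      using W_le_one_div_exp_minus_one[OF x] by (simp add: f'_def)
    ultimately show "\<exists>y. (f_lemma1 has_real_derivative y) (at x) \<and> 0 \<le> y" by blast
  qed
qed

definition G :: "nat \<Rightarrow> real \<Rightarrow> real" where
  "G n t = 1 - (1 - W t / n) ^ n / (W t * (exp t - 1))"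

definition G_primitive :: "nat \<Rightarrow> real \<Rightarrow> real" where
  "G_primitive n t = t + ln (W t) + (\<Sum>k<n. (1 - W t / n) ^ Suc k / Suc k)"

definition G_trunc :: "nat \<Rightarrow> real \<Rightarrow> real" where
  "G_trunc n t = (if W t \<le> n then G n t else 1)"

lemma G_primitive_has_derivative:
  assumes "n > 0" "t > 0"
  shows "(G_primitive n has_real_derivative G n t) (at t)"
proof -
  have "(G_primitive n has_real_derivative
      1 + inverse (W t) * (- 1 / (exp t - 1))
        + (- (1 - (1 - W t / n) ^ n) / W t) * (- 1 / (exp t - 1))) (at t)"
    unfolding G_primitive_def[abs_def]
    using DERIV_chain2[OF DERIV_ln W_has_derivative[OF assms(2)]]
      DERIV_chain2[OF partial_log_series_has_derivative[OF assms(1)] W_has_derivative[OF assms(2)]]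
      W_pos[OF assms(2)]
    by (intro DERIV_add DERIV_ident) auto
  also have "1 + inverse w * (- 1 / E) + (- (1 - q) / w) * (- 1 / E) = 1 - q / (w * E)"
    if "w \<noteq> 0" "E \<noteq> 0" for w E q :: real
    using that by (simp add: field_simps)
  then have "1 + inverse (W t) * (- 1 / (exp t - 1))
        + (- (1 - (1 - W t / n) ^ n) / W t) * (- 1 / (exp t - 1)) = G n t"
    using W_pos[OF assms(2)] assms unfolding G_def by simp
  finally show ?thesis .
qed

lemma tendsto_G_primitive: "n > 0 \<Longrightarrow> (G_primitive n \<longlongrightarrow> harm n) at_top"
proof -
  assume n: "n > 0"
  have "((\<lambda>t. t + ln (W t)) \<longlongrightarrow> 0) at_top"
    unfolding W_def by real_asymp
  moreover have "(W \<longlongrightarrow> 0) at_top"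
    unfolding W_def[abs_def] by real_asymp
  then have "((\<lambda>t. \<Sum>k<n. (1 - W t / n) ^ Suc k / Suc k) \<longlongrightarrow>
      (\<Sum>k<n. (1 - 0 / n) ^ Suc k / Suc k)) at_top"
    by (intro tendsto_intros) auto
  ultimately have "(G_primitive n \<longlongrightarrow> 0 + (\<Sum>k<n. 1 / Suc k)) at_top"
    unfolding G_primitive_def[abs_def] by (intro tendsto_add) auto
  then show ?thesis
    by (simp add: harm_altdef field_simps del: of_nat_Suc)
qed

lemma G_primitive_at_W: "n > 0 \<Longrightarrow> G_primitive n (W n) = W n + ln n"
  by (simp add: G_primitive_def W_W)

lemma one_minus_f_lemma1_le_G:
  assumes "n > 0" "t > 0" "W t \<le> n"
  shows "1 - f_lemma1 t \<le> G n t"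
proof -
  have "(1 - W t / n) ^ n \<le> exp (- W t)"
    using assms by (intro exp_ge_one_minus_x_over_n_power_n) auto
  moreover have "0 < W t * (exp t - 1)"
    using W_pos assms by simp
  ultimately show ?thesis
    unfolding one_minus_f_lemma1_eq[OF assms(2)] G_def
    by (simp add: divide_right_mono)
qed

lemma G_trunc_has_integral:
  assumes n: "n > 0"
  shows "(G_trunc n has_integral (harm n - ln n)) {0<..}"
proof -
  define a where "a = W n"
  have a: "a > 0" using W_pos n by (simp add: a_def)
  have W_le_n: "W t \<le> n \<longleftrightarrow> a \<le> t" if "t > 0" for t
    using W_le_iff that n by (simp add: a_def)
  have "(G n has_integral (harm n - G_primitive n a)) {a..}"
  proof (rule has_integral_at_top_nonneg_deriv[where F = "G_primitive n"])
    fix t assume "a \<le> t"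
    then show "(G_primitive n has_real_derivative G n t) (at t)" "0 \<le> G n t"
      using a n W_le_n[of t] one_minus_f_lemma1_le_G[of n t] f_lemma1_le_one[of t]
      by (auto intro!: G_primitive_has_derivative)
  qed (rule tendsto_G_primitive[OF n])
  then have tail: "(G_trunc n has_integral (harm n - G_primitive n a)) {a..}"
    by (rule has_integral_cong[THEN iffD1, rotated])
       (use a W_le_n in \<open>auto simp: G_trunc_def\<close>)
  have head: "(G_trunc n has_integral a) {0..a}"
  proof (rule has_integral_spike[OF negligible_sing])
    fix t assume "t \<in> {0..a} - {0}"
    then show "G_trunc n t = 1"
      using W_le_n[of t] W_W[of n] n
      by (cases "t = a") (auto simp: G_trunc_def G_def a_def)
  qed (use has_integral_const_real[of "1::real" 0 a] a in simp)
  have "(G_trunc n has_integral (a + (harm n - G_primitive n a))) ({0..a} \<union> {a..})"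
    by (rule has_integral_Un[OF head tail]) (rule negligible_subset[OF negligible_sing[of a]], auto)
  moreover have "{0..a} \<union> {a..} = {0..}" using a by auto
  ultimately have "(G_trunc n has_integral (harm n - ln n)) {0..}"
    using G_primitive_at_W[OF n] by (simp add: a_def)
  then show ?thesis
    by (rule has_integral_spike_set_eq[THEN iffD1, rotated -1])
       (rule negligible_subset[OF negligible_sing[of 0]], auto)+
qed

lemma G_trunc_Suc_le:
  assumes "n > 0" "t > 0"
  shows "G_trunc (Suc n) t \<le> G_trunc n t"
proof -
  have den: "0 < W t * (exp t - 1)" using W_pos assms by simp
  consider "W t \<le> n" | "n < W t" "W t \<le> Suc n" | "Suc n < W t" by linarith
  then show ?thesis
  proof cases
    case 1
    then have "(1 - W t / n) ^ n \<le> (1 - W t / Suc n) ^ Suc n"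
      using one_minus_div_power_le_Suc_power[of n "W t"] W_pos[OF assms(2)] assms by simp
    then show ?thesis
      using 1 den by (simp add: G_trunc_def G_def divide_right_mono)
  next
    case 2
    then have "0 \<le> 1 - W t / Suc n" by (simp add: field_simps)
    then show ?thesis
      using 2 den by (simp add: G_trunc_def G_def)
  qed (simp add: G_trunc_def)
qed

lemma tendsto_G_trunc:
  assumes "t > 0"
  shows "(\<lambda>n. G_trunc n t) \<longlonglongrightarrow> 1 - f_lemma1 t"
proof -
  have "(\<lambda>n. (1 + (- W t) / n) ^ n) \<longlonglongrightarrow> exp (- W t)"
    by (rule tendsto_exp_limit_sequentially)
  then have "(\<lambda>n. G n t) \<longlonglongrightarrow> 1 - f_lemma1 t"
    unfolding one_minus_f_lemma1_eq[OF assms] G_def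
    using W_pos[OF assms] assms by (intro tendsto_intros) auto
  moreover have "\<forall>\<^sub>F n in sequentially. G n t = G_trunc n t"
    using eventually_ge_at_top[of "nat \<lceil>W t\<rceil>"]
    by eventually_elim (use real_nat_ceiling_ge[of "W t"] in \<open>auto simp: G_trunc_def\<close>)
  ultimately show ?thesis
    by (rule Lim_transform_eventually)
qed

lemma has_integral_one_minus_f_lemma1:
  "((\<lambda>t. 1 - f_lemma1 t) has_integral euler_mascheroni) {0<..}"
proof -
  define I where "I = (\<lambda>k. harm (Suc k) - ln (Suc k))"
  have int: "(G_trunc (Suc k) has_integral I k) {0<..}" for k
    unfolding I_def by (rule G_trunc_has_integral) simp
  have I: "I \<longlonglongrightarrow> euler_mascheroni"
    unfolding I_def using LIMSEQ_Suc[OF euler_mascheroni_LIMSEQ] by simp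
  have integral_eq: "(\<lambda>k. integral {0<..} (G_trunc (Suc k))) = I"
    using int by (intro ext integral_unique)
  have "(\<lambda>t. 1 - f_lemma1 t) integrable_on {0<..} \<and>
      (\<lambda>k. integral {0<..} (G_trunc (Suc k))) \<longlonglongrightarrow> integral {0<..} (\<lambda>t. 1 - f_lemma1 t)"
  proof (rule monotone_convergence_decreasing)
    show "G_trunc (Suc k) integrable_on {0<..}" for k
      using int by blast
    show "G_trunc (Suc (Suc k)) t \<le> G_trunc (Suc k) t" if "t \<in> {0<..}" for k t
      using G_trunc_Suc_le that by simp
    show "(\<lambda>k. G_trunc (Suc k) t) \<longlonglongrightarrow> 1 - f_lemma1 t" if "t \<in> {0<..}" for t
      using LIMSEQ_Suc[OF tendsto_G_trunc] that by simp
    show "bounded (range (\<lambda>k. integral {0<..} (G_trunc (Suc k))))"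
      unfolding integral_eq by (rule convergent_imp_bounded[OF I])
  qed
  then show ?thesis
    using I LIMSEQ_unique unfolding integral_eq by (metis has_integral_integral)
qed

theorem lemma1:
  shows "mono_on {0<..} f_lemma1 \<and>
         (f_lemma1 \<longlongrightarrow> 0) (at_right 0) \<and>
         (f_lemma1 \<longlongrightarrow> 1) at_top \<and>
         (\<lambda>t. 1 - f_lemma1 t) \<sim>[at_top] (\<lambda>t. exp (- t) / 2) \<and>
         ((\<lambda>t. 1 - f_lemma1 t) has_integral euler_mascheroni) {0<..}"
proof (intro conjI)
  show "(f_lemma1 \<longlongrightarrow> 0) (at_right 0)" "(f_lemma1 \<longlongrightarrow> 1) at_top"
    "(\<lambda>t. 1 - f_lemma1 t) \<sim>[at_top] (\<lambda>t. exp (- t) / 2)"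
    unfolding f_lemma1_def by real_asymp+
qed (fact mono_on_f_lemma1 has_integral_one_minus_f_lemma1)+

end
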